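(* Let $F,G\in H^2(\mathbb D)$. Then $|F|=|G|$ on $(-1,1)$ if and only if there exist holomorphic functions $u,v$ on $\mathbb D$ such that $F=uv$ and $G=uv^*$.
   Context: $\mathbb D$ is the open unit disc and $H^2(\mathbb D)$ the Hardy space of holomorphic $F$ on $\mathbb D$ with $\sup_{0\le r<1}\frac1{2\pi}\int_{-\pi}^{\pi}|F(re^{i\theta})|^2\,\mathrm d\theta<\infty$. For $v$ holomorphic on $\mathbb D$, $v^*(w)=\overline{v(\bar w)}$. *)

theory Defs
  imports "HOL-Complex_Analysis.Complex_Analysis"
begin

definition hardy2 :: "(complex \<Rightarrow> complex) set" where
  "hardy2 = {F. F holomorphic_on ball 0 1 \<and>
     bdd_above ((\<lambda>r. (1 / (2 * pi)) * integral {-pi..pi} (\<lambda>\<theta>. (cmod (F (complex_of_real r * cis \<theta>)))\<^sup>2)) ` {0..<1})}"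

definition reflect :: "(complex \<Rightarrow> complex) \<Rightarrow> complex \<Rightarrow> complex" where
  "reflect v w = cnj (v (cnj w))"

end

theory Submission
  imports Defs
begin

text \<open>On the real segment \<open>F F\<^sup>* = \<bar>F\<bar>\<^sup>2\<close>, so by the identity theorem \<open>\<bar>F\<bar> = \<bar>G\<bar>\<close> on
  \<open>(-1, 1)\<close> amounts to \<open>F F\<^sup>* = G G\<^sup>*\<close> on the disc; only holomorphy of \<open>F\<close> and \<open>G\<close> is used,
  never the \<open>H\<^sup>2\<close> bound. Comparing zero orders gives
  \<open>ord\<^sub>F z + ord\<^sub>F (cnj z) = ord\<^sub>G z + ord\<^sub>G (cnj z)\<close>. Weierstrass products in the disc
  provide \<open>u\<^sub>0\<close> and \<open>v\<^sub>0\<close> with divisors \<open>min ord\<^sub>F ord\<^sub>G\<close> and \<open>(ord\<^sub>F - ord\<^sub>G)\<^sup>+\<close>, so that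
  \<open>F = h u\<^sub>0 v\<^sub>0\<close> and \<open>G = k u\<^sub>0 v\<^sub>0\<^sup>*\<close> with \<open>h\<close>, \<open>k\<close> zero-free. Then \<open>h h\<^sup>* = k k\<^sup>*\<close>, hence
  \<open>k / h = \<psi>\<^sup>2\<close> with \<open>\<psi> \<psi>\<^sup>* = 1\<close> (take \<open>\<psi> = exp (g / 2)\<close> for a logarithm \<open>g\<close> of \<open>k / h\<close>,
  which satisfies \<open>g + g\<^sup>* = 0\<close>), and \<open>u = h u\<^sub>0 \<psi>\<close>, \<open>v = v\<^sub>0 \<psi>\<^sup>*\<close> work.\<close>

section \<open>Zeros of holomorphic functions\<close>

lemma holomorphic_eventually_nonzero:
  assumes "f holomorphic_on S" "open S" "connected S" "z \<in> S" "w \<in> S" "f w \<noteq> 0"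
  shows "eventually (\<lambda>x. f x \<noteq> 0) (at z)"
  using non_zero_neighbour_alt[OF assms] by (rule eventually_mono) simp

lemma zorder_pos_iff_holomorphic:
  assumes "f holomorphic_on S" "open S" "connected S" "z \<in> S" "w \<in> S" "f w \<noteq> 0"
  shows "zorder f z > 0 \<longleftrightarrow> f z = 0"
  using zorder_pos_iff[OF assms(1,2,4)] holomorphic_eventually_nonzero[OF assms]
  by (simp add: eventually_frequently)

lemma zorder_nonneg_holomorphic:
  assumes "f holomorphic_on S" "open S" "connected S" "z \<in> S" "w \<in> S" "f w \<noteq> 0"
  shows "zorder f z \<ge> 0"
  using zorder_ge_0[OF holomorphic_on_imp_analytic_at[OF assms(1,2,4)]] holomorphic_eventually_nonzero[OF assms]
  by (simp add: eventually_frequently)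

lemma zorder_mult_holomorphic:
  assumes "f holomorphic_on S" "g holomorphic_on S" "open S" "connected S" "z \<in> S"
    and "w1 \<in> S" "f w1 \<noteq> 0" "w2 \<in> S" "g w2 \<noteq> 0"
  shows "zorder (\<lambda>x. f x * g x) z = zorder f z + zorder g z"
proof (rule zorder_times_analytic)
  show "f analytic_on {z}" "g analytic_on {z}"
    using assms by (auto intro: holomorphic_on_imp_analytic_at)
  have "eventually (\<lambda>x. f x \<noteq> 0) (at z)" "eventually (\<lambda>x. g x \<noteq> 0) (at z)"
    using assms by (auto intro: holomorphic_eventually_nonzero)
  thus "eventually (\<lambda>x. f x * g x \<noteq> 0) (at z)"
    by eventually_elim simp
qed

lemma holomorphic_eq_0_if_mult_eq_0:
  assumes "f holomorphic_on S" "g holomorphic_on S" "open S" "connected S"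
    and "\<And>x. x \<in> S \<Longrightarrow> f x * g x = 0" "w \<in> S" "g w \<noteq> 0" "z \<in> S"
  shows "f z = 0"
proof -
  define T where "T = S \<inter> g -` (- {0})"
  have "open T"
    unfolding T_def using assms(2,3)
    by (intro continuous_open_preimage holomorphic_on_imp_continuous_on) auto
  moreover have "T \<noteq> {}"
    using assms(6,7) by (auto simp: T_def)
  ultimately show "f z = 0"
    using analytic_continuation_open[of T S f "\<lambda>_. 0"] assms by (auto simp: T_def)
qed

lemma holomorphic_mult_not_identically_0:
  assumes "f holomorphic_on S" "g holomorphic_on S" "open S" "connected S"
    and "w1 \<in> S" "f w1 \<noteq> 0" "w2 \<in> S" "g w2 \<noteq> 0"
  obtains w where "w \<in> S" "f w * g w \<noteq> 0"
proof -
  have "\<not> (\<forall>x\<in>S. f x * g x = 0)"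
    using holomorphic_eq_0_if_mult_eq_0[OF assms(1-4) _ assms(7,8,5)] assms(6) by blast
  thus ?thesis
    using that by blast
qed

lemma holomorphic_factor_by_zorder:
  assumes "f holomorphic_on S" "g holomorphic_on S" "open S" "connected S"
    and "w1 \<in> S" "f w1 \<noteq> 0" "w2 \<in> S" "g w2 \<noteq> 0"
    and "\<And>z. z \<in> S \<Longrightarrow> zorder f z = zorder g z"
  obtains h where "h holomorphic_on S" "\<And>z. z \<in> S \<Longrightarrow> h z \<noteq> 0" "\<And>z. z \<in> S \<Longrightarrow> g z = h z * f z"
proof -
  have "f z = 0 \<longleftrightarrow> g z = 0" if "z \<in> S" for z
    using zorder_pos_iff_holomorphic[OF assms(1,3,4) that assms(5,6)]
      zorder_pos_iff_holomorphic[OF assms(2,3,4) that assms(7,8)] assms(9)[OF that] by simp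
  from holomorphic_zorder_factorization[OF assms(2-4,1) this assms(9)] that show ?thesis
    by blast
qed

lemma holomorphic_finite_zeros_in_compact:
  assumes "f holomorphic_on S" "open S" "connected S" "compact K" "K \<subseteq> S" "w \<in> S" "f w \<noteq> 0"
  shows "finite {z \<in> K. f z = 0}"
proof (cases "f constant_on S")
  case True
  then obtain c where "\<And>z. z \<in> S \<Longrightarrow> f z = c"
    by (auto simp: constant_on_def)
  hence "{z \<in> K. f z = 0} = {}"
    using assms(5-7) by force
  thus ?thesis
    by (metis finite.emptyI)
qed (use holomorphic_compact_finite_zeros assms in blast)

lemma zorder_monomial: "zorder (\<lambda>\<zeta>. (\<zeta> - w) ^ k) z = (if z = w then int k else 0)"
proof (cases "z = w")
  case True
  have "zorder (\<lambda>\<zeta>. (\<zeta> - w) ^ k) w = int k"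
    by (rule zorder_eqI[where S = UNIV and g = "\<lambda>_. 1"]) (auto simp: power_int_of_nat)
  thus ?thesis
    using True by simp
next
  case False
  thus ?thesis
    by (auto intro!: zorder_eq_0I analytic_intros)
qed

lemma holomorphic_with_finite_zorder:
  fixes d :: "complex \<Rightarrow> nat"
  assumes "finite {z. d z > 0}"
  obtains v where "v holomorphic_on UNIV" "\<And>z. zorder v z = d z" "\<And>z. v z = 0 \<longleftrightarrow> d z > 0"
proof -
  define Z where "Z = {z. d z > 0}"
  define v where "v \<zeta> = (\<Prod>w\<in>Z. (\<zeta> - w) ^ d w)" for \<zeta>
  have v_eq_0_iff: "v \<zeta> = 0 \<longleftrightarrow> \<zeta> \<in> Z" for \<zeta>
    using assms by (auto simp: v_def Z_def)
  show ?thesis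
  proof (rule that[of v])
    show "v holomorphic_on UNIV"
      unfolding v_def by (intro holomorphic_intros)
    fix z
    show "v z = 0 \<longleftrightarrow> d z > 0"
      by (simp add: v_eq_0_iff Z_def)
    have "\<not> z islimpt Z"
      using assms by (intro islimpt_finite) (simp add: Z_def)
    hence "eventually (\<lambda>\<zeta>. v \<zeta> \<noteq> 0) (at z)"
      by (simp add: islimpt_iff_eventually v_eq_0_iff)
    hence "zorder v z = (\<Sum>w\<in>Z. zorder (\<lambda>\<zeta>. (\<zeta> - w) ^ d w) z)"
      unfolding v_def by (intro zorder_prod_analytic analytic_intros)
    also have "\<dots> = (\<Sum>w\<in>Z. if z = w then int (d w) else 0)"
      by (simp add: zorder_monomial)
    also have "\<dots> = d z"
      using assms by (simp add: sum.delta Z_def)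
    finally show "zorder v z = d z" .
  qed
qed

lemma closed_if_finite_Int_cball:
  fixes A :: "'a::real_normed_vector set"
  assumes "\<And>r. r \<ge> 0 \<Longrightarrow> finite (A \<inter> cball 0 r)"
  shows "closed A"
  unfolding closed_limpt
proof (intro allI impI)
  fix x assume "x islimpt A"
  have "\<not> x islimpt (A \<inter> cball 0 (norm x + 1))"
    using assms by (intro islimpt_finite) auto
  hence "eventually (\<lambda>y. y \<notin> A \<inter> cball 0 (norm x + 1)) (at x)"
    by (simp add: islimpt_iff_eventually)
  moreover have "eventually (\<lambda>y. y \<in> ball x 1) (at x)"
    by (intro eventually_at_in_open') auto
  ultimately have "eventually (\<lambda>y. y \<notin> A) (at x)"
  proof eventually_elim
    case (elim y)
    have "norm y \<le> norm x + 1"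
      using elim(2) norm_triangle_ineq2[of y x] by (simp add: dist_norm norm_minus_commute)
    thus ?case
      using elim(1) by auto
  qed
  with \<open>x islimpt A\<close> show "x \<in> A"
    by (simp add: islimpt_iff_eventually)
qed

section \<open>Weierstrass products in the unit disc\<close>

locale disc_weierstrass_product =
  fixes a :: "nat \<Rightarrow> complex" and p :: "nat \<Rightarrow> nat"
  assumes a_nonzero: "\<And>n. a n \<noteq> 0"
    and norm_a_less_1: "\<And>n. norm (a n) < 1"
    and norm_a_tendsto_1: "(\<lambda>n. norm (a n)) \<longlonglongrightarrow> 1"
    and p_ge: "\<And>n. n \<le> p n"
begin

text \<open>The argument of the \<open>n\<close>-th factor equals \<open>1\<close> exactly at \<open>a n\<close> and tends to \<open>0\<close>
  uniformly on compact subsets of the disc as \<open>norm (a n) \<rightarrow> 1\<close>.\<close>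

definition factor_arg :: "nat \<Rightarrow> complex \<Rightarrow> complex" where
  "factor_arg n z = (1 - cnj (a n) * a n) / (1 - cnj (a n) * z)"

definition factor :: "nat \<Rightarrow> complex \<Rightarrow> complex" where
  "factor n z = weierstrass_factor (p n) (factor_arg n z)"

definition f :: "complex \<Rightarrow> complex" where
  "f z = (\<Prod>n. factor n z)"

lemma norm_denom_ge:
  assumes "norm z \<le> r"
  shows "1 - r \<le> norm (1 - cnj (a n) * z)"
proof -
  have "norm (a n) * norm z \<le> norm z"
    using norm_a_less_1[of n] by (intro mult_left_le_one_le) auto
  hence "norm (cnj (a n) * z) \<le> r"
    using assms by (simp add: norm_mult)
  thus ?thesis
    using norm_triangle_ineq2[of 1 "cnj (a n) * z"] by simp
qed

lemma denom_nonzero: "norm z < 1 \<Longrightarrow> cnj (a n) * z \<noteq> 1"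
  using norm_denom_ge[of z "norm z" n] by auto

lemma norm_factor_numerator: "norm (1 - cnj (a n) * a n) = 1 - (norm (a n))\<^sup>2"
proof -
  have eq: "1 - cnj (a n) * a n = of_real (1 - (norm (a n))\<^sup>2)"
    by (subst of_real_diff, subst complex_norm_square) (simp add: mult.commute)
  have "(norm (a n))\<^sup>2 \<le> 1"
    using norm_a_less_1[of n] by (simp add: abs_square_le_1 less_imp_le)
  thus ?thesis
    unfolding eq norm_of_real by simp
qed

lemma eventually_factor_close_to_1:
  assumes "r < 1"
  shows "eventually (\<lambda>n. \<forall>z\<in>cball 0 r. norm (factor n z - 1) \<le> 3 * (1/2) ^ Suc n) sequentially"
proof -
  have "(\<lambda>n. 1 - (norm (a n))\<^sup>2) \<longlonglongrightarrow> 1 - 1\<^sup>2"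
    by (intro tendsto_intros norm_a_tendsto_1)
  hence lim: "(\<lambda>n. 1 - (norm (a n))\<^sup>2) \<longlonglongrightarrow> 0"
    by simp
  have "(1 - r) / 2 > 0"
    using assms by simp
  from tendstoD[OF lim this]
  have "eventually (\<lambda>n. \<bar>1 - (norm (a n))\<^sup>2\<bar> < (1 - r) / 2) sequentially"
    by (simp add: dist_real_def)
  thus ?thesis
  proof eventually_elim
    case (elim n)
    show ?case
    proof
      fix z :: complex assume z: "z \<in> cball 0 r"
      have nonneg: "0 \<le> 1 - (norm (a n))\<^sup>2"
        using norm_a_less_1[of n] by (simp add: abs_square_le_1 less_imp_le)
      have "norm (factor_arg n z) = (1 - (norm (a n))\<^sup>2) / norm (1 - cnj (a n) * z)"
        by (simp only: factor_arg_def norm_divide norm_factor_numerator)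
      also have "\<dots> \<le> (1 - (norm (a n))\<^sup>2) / (1 - r)"
        using norm_denom_ge[of z r n] z nonneg assms by (intro divide_left_mono mult_pos_pos) auto
      also have "\<dots> \<le> ((1 - r) / 2) / (1 - r)"
        using elim nonneg assms by (intro divide_right_mono) auto
      also have "\<dots> = 1/2"
        using assms by simp
      finally have "norm (factor_arg n z) \<le> 1/2" .
      hence "norm (factor n z - 1) \<le> 3 * (1/2) ^ Suc (p n)"
        unfolding factor_def
        by (intro order_trans[OF weierstrass_factor_bound] mult_left_mono power_mono) auto
      also have "\<dots> \<le> 3 * (1/2) ^ Suc n"
        using p_ge[of n] by (intro mult_left_mono power_decreasing) auto
      finally show "norm (factor n z - 1) \<le> 3 * (1/2) ^ Suc n" .
    qed
  qed
qed

lemma summable_factor_bound: "summable (\<lambda>n. 3 * (1/2::real) ^ Suc n)"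
  by (intro summable_mult) (simp add: summable_Suc_iff)

lemma has_prod:
  assumes "norm z < 1"
  shows "(\<lambda>n. factor n z) has_prod f z"
proof -
  have "abs_convergent_prod (\<lambda>n. factor n z)"
    unfolding abs_convergent_prod_conv_summable
  proof (rule summable_comparison_test_ev[OF _ summable_factor_bound])
    show "eventually (\<lambda>n. norm (norm (factor n z - 1)) \<le> 3 * (1/2) ^ Suc n) sequentially"
      using eventually_factor_close_to_1[OF assms] by eventually_elim simp
  qed
  thus ?thesis
    unfolding f_def by (intro convergent_prod_has_prod abs_convergent_prod_imp_convergent_prod)
qed

lemma factor_holomorphic [holomorphic_intros]: "factor n holomorphic_on ball 0 1"
  unfolding factor_def factor_arg_def by (intro holomorphic_intros) (auto dest: denom_nonzero)

lemma factor_eq_0_iff: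
  assumes "norm z < 1"
  shows "factor n z = 0 \<longleftrightarrow> z = a n"
proof -
  have "factor n z = 0 \<longleftrightarrow> 1 - cnj (a n) * a n = 1 - cnj (a n) * z"
    using denom_nonzero[OF assms, of n] by (simp add: factor_def factor_arg_def)
  also have "\<dots> \<longleftrightarrow> z = a n"
    using a_nonzero[of n] by auto
  finally show ?thesis .
qed

lemma f_eq_0_iff: "norm z < 1 \<Longrightarrow> f z = 0 \<longleftrightarrow> z \<in> range a"
  using has_prod_eq_0_iff[OF has_prod] factor_eq_0_iff by auto

lemma f_0_nonzero: "f 0 \<noteq> 0"
  using f_eq_0_iff[of 0] a_nonzero by (metis imageE norm_zero zero_less_one)

lemma uniform_limit:
  assumes "r < 1"
  shows "uniform_limit (cball 0 r) (\<lambda>N z. \<Prod>n<N. factor n z) f sequentially"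
proof -
  have "uniformly_convergent_on (cball 0 r) (\<lambda>N z. \<Prod>n<N. factor n z)"
  proof (rule uniformly_convergent_on_prod')
    show "uniformly_convergent_on (cball 0 r) (\<lambda>N z. \<Sum>n<N. norm (factor n z - 1))"
    proof (rule Weierstrass_m_test'_ev[OF _ summable_factor_bound])
      show "\<forall>\<^sub>F n in sequentially. \<forall>z\<in>cball 0 r. norm (norm (factor n z - 1)) \<le> 3 * (1/2) ^ Suc n"
        using eventually_factor_close_to_1[OF assms] by eventually_elim simp
    qed
    show "continuous_on (cball 0 r) (factor n)" for n
      using assms by (intro holomorphic_on_imp_continuous_on holomorphic_on_subset[OF factor_holomorphic]) auto
  qed auto
  then obtain g where g: "uniform_limit (cball 0 r) (\<lambda>N z. \<Prod>n<N. factor n z) g sequentially"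
    by (auto simp: uniformly_convergent_on_def)
  also have "?this \<longleftrightarrow> ?thesis"
  proof (intro uniform_limit_cong)
    fix z :: complex assume z: "z \<in> cball 0 r"
    have "(\<lambda>N. \<Prod>n<N. factor n z) \<longlonglongrightarrow> f z"
      using z assms by (intro has_prod_imp_tendsto' has_prod) auto
    thus "g z = f z"
      using tendsto_uniform_limitI[OF g z] LIMSEQ_unique by blast
  qed auto
  finally show ?thesis .
qed

lemma holomorphic: "f holomorphic_on ball 0 1"
proof (rule holomorphic_uniform_sequence[where f = "\<lambda>N z. \<Prod>n<N. factor n z"])
  fix x :: complex assume x: "x \<in> ball 0 1"
  define d where "d = (1 - norm x) / 2"
  have "cball x d \<subseteq> cball 0 (norm x + d)"
    using cball_subset_cball_iff[of x d 0 "norm x + d"] by simp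
  moreover have "norm x + d < 1"
    using x by (simp add: d_def field_simps)
  ultimately have "cball x d \<subseteq> ball 0 1" "uniform_limit (cball x d) (\<lambda>N z. \<Prod>n<N. factor n z) f sequentially"
    by (auto intro: uniform_limit_on_subset[OF uniform_limit])
  moreover have "d > 0"
    using x by (simp add: d_def)
  ultimately show "\<exists>d>0. cball x d \<subseteq> ball 0 1 \<and> uniform_limit (cball x d) (\<lambda>N z. \<Prod>n<N. factor n z) f sequentially"
    by blast
qed (auto intro!: holomorphic_intros)

lemma finite_vimage_a: "norm z < 1 \<Longrightarrow> finite (a -` {z})"
proof -
  assume z: "norm z < 1"
  obtain N where "\<And>n. n \<ge> N \<Longrightarrow> norm (a n) > norm z"
    using order_tendstoD(1)[OF norm_a_tendsto_1 z] by (auto simp: eventually_at_top_linorder)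
  hence "a -` {z} \<subseteq> {..<N}"
    by (force simp: not_less[symmetric])
  thus ?thesis
    using finite_subset by blast
qed

lemma zorder_factor:
  assumes "norm z < 1"
  shows "zorder (factor n) z = (if z = a n then 1 else 0)"
proof (cases "z = a n")
  case True
  define q where
    "q = (\<lambda>z. - cnj (a n) / (1 - cnj (a n) * z) * exp (\<Sum>k=1..p n. factor_arg n z ^ k / of_nat k))"
  have "zorder (factor n) (a n) = 1"
  proof (rule zorder_eqI[where S = "ball 0 1" and g = q])
    show "q holomorphic_on ball 0 1"
      unfolding q_def factor_arg_def by (intro holomorphic_intros) (auto dest: denom_nonzero)
    show "q (a n) \<noteq> 0"
      using a_nonzero[of n] denom_nonzero[OF norm_a_less_1, of n n] by (simp add: q_def)
    fix x :: complex assume "x \<in> ball 0 1"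
    hence "1 - factor_arg n x = - cnj (a n) / (1 - cnj (a n) * x) * (x - a n)"
      using denom_nonzero[of x n]
      by (simp add: factor_arg_def field_simps)
    thus "factor n x = q x * (x - a n) powi 1"
      by (simp add: factor_def q_def weierstrass_factor_def)
  qed (use norm_a_less_1[of n] in auto)
  thus ?thesis
    using True by simp
next
  case False
  have "factor n analytic_on {z}"
    using assms by (intro holomorphic_on_imp_analytic_at[OF factor_holomorphic]) auto
  thus ?thesis
    using False factor_eq_0_iff[OF assms] by (simp add: zorder_eq_0I)
qed

lemma shift: "disc_weierstrass_product (\<lambda>n. a (n + N)) (\<lambda>n. p (n + N))"
proof
  show "(\<lambda>n. norm (a (n + N))) \<longlonglongrightarrow> 1"
    using LIMSEQ_ignore_initial_segment[OF norm_a_tendsto_1] .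
  show "n \<le> p (n + N)" for n
    using p_ge[of "n + N"] by simp
qed (auto simp: a_nonzero norm_a_less_1)

lemma f_eq_tail_mult_prod:
  assumes "norm z < 1"
  shows "f z = disc_weierstrass_product.f (\<lambda>n. a (n + N)) (\<lambda>n. p (n + N)) z * (\<Prod>n<N. factor n z)"
proof -
  interpret tail: disc_weierstrass_product "\<lambda>n. a (n + N)" "\<lambda>n. p (n + N)"
    by (rule shift)
  have "(\<lambda>n. factor n z) has_prod ((\<Prod>n<N. factor n z) * (\<Prod>n. factor (n + N) z))"
    using has_prod[OF assms] by (intro has_prod_ignore_initial_segment') (auto simp: has_prod_iff)
  moreover have "tail.f z = (\<Prod>n. factor (n + N) z)"
    by (simp add: tail.f_def tail.factor_def tail.factor_arg_def factor_def factor_arg_def)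
  ultimately show ?thesis
    using has_prod_unique2[OF has_prod[OF assms]] by (simp add: mult.commute)
qed

lemma zorder_f:
  assumes z: "norm z < 1"
  shows "zorder f z = card (a -` {z})"
proof -
  obtain N where N: "a -` {z} \<subseteq> {..<N}"
    using finite_vimage_a[OF z] finite_nat_bounded by blast
  interpret tail: disc_weierstrass_product "\<lambda>n. a (n + N)" "\<lambda>n. p (n + N)"
    by (rule shift)
  have near_z: "eventually (\<lambda>w. w \<in> ball 0 1) (at z)"
    using z by (intro eventually_at_in_open') auto
  have "eventually (\<lambda>w. f w \<noteq> 0 \<and> w \<in> ball 0 1) (at z)"
    using z by (intro non_zero_neighbour_alt[OF holomorphic _ _ _ _ f_0_nonzero]) auto
  hence nonzero: "eventually (\<lambda>w. tail.f w * (\<Prod>n<N. factor n w) \<noteq> 0) (at z)"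
    by eventually_elim (metis f_eq_tail_mult_prod mem_ball_0)
  have analytic: "g holomorphic_on ball 0 1 \<Longrightarrow> g analytic_on {z}" for g
    using z by (intro holomorphic_on_imp_analytic_at) auto
  have "tail.f z \<noteq> 0"
    using tail.f_eq_0_iff[OF z] N by force
  hence tail_zorder: "zorder tail.f z = 0"
    by (intro zorder_eq_0I analytic tail.holomorphic)
  have "zorder f z = zorder (\<lambda>w. tail.f w * (\<Prod>n<N. factor n w)) z"
    using near_z by (intro zorder_cong) (auto elim!: eventually_mono simp: f_eq_tail_mult_prod)
  also have "\<dots> = zorder tail.f z + (\<Sum>n<N. zorder (factor n) z)"
    using nonzero
    by (simp add: zorder_times_analytic zorder_prod_analytic analytic tail.holomorphic
        factor_holomorphic holomorphic_intros eventually_mono)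
  also have "\<dots> = int (card ({..<N} \<inter> a -` {z}))"
    by (simp add: tail_zorder zorder_factor[OF z] sum.If_cases Int_def eq_commute)
  also have "{..<N} \<inter> a -` {z} = a -` {z}"
    using N by blast
  finally show ?thesis
    by simp
qed

end

section \<open>Prescribed zeros in the unit disc\<close>

definition disc_to_plane :: "complex \<Rightarrow> complex" where
  "disc_to_plane z = of_real (1 / (1 - norm z)) * z"

definition plane_to_disc :: "complex \<Rightarrow> complex" where
  "plane_to_disc w = of_real (1 / (1 + norm w)) * w"

lemma norm_disc_to_plane: "norm z < 1 \<Longrightarrow> norm (disc_to_plane z) = norm z / (1 - norm z)"
  by (simp only: disc_to_plane_def norm_mult norm_of_real) simp

lemma norm_plane_to_disc: "norm (plane_to_disc w) = norm w / (1 + norm w)"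
  by (simp only: plane_to_disc_def norm_mult norm_of_real) (simp add: add_nonneg_nonneg)

lemma plane_to_disc_disc_to_plane: "norm z < 1 \<Longrightarrow> plane_to_disc (disc_to_plane z) = z"
  by (simp add: plane_to_disc_def norm_disc_to_plane) (simp add: disc_to_plane_def field_simps)

lemma disc_to_plane_plane_to_disc: "disc_to_plane (plane_to_disc w) = w"
proof -
  have pos: "0 < 1 + norm w"
    by (simp add: add_pos_nonneg)
  hence "1 / (1 - norm (plane_to_disc w)) = 1 + norm w"
    unfolding norm_plane_to_disc by (simp add: field_simps)
  hence "disc_to_plane (plane_to_disc w) = of_real ((1 + norm w) * (1 / (1 + norm w))) * w"
    by (simp only: disc_to_plane_def plane_to_disc_def of_real_mult mult.assoc)
  also have "(1 + norm w) * (1 / (1 + norm w)) = 1"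
    using pos by simp
  finally show ?thesis
    by simp
qed

text \<open>\<open>disc_to_plane\<close> turns a subset of the disc with finitely many points in every smaller disc
  into a closed subset of \<open>\<complex>\<close> with finitely many points in every disc, which
  \<open>sequence_of_sparse_set_exists'\<close> enumerates.\<close>

lemma disc_sequence_with_multiplicities:
  fixes Z :: "complex set" and c :: "complex \<Rightarrow> nat"
  assumes "infinite Z" "Z \<subseteq> ball 0 1" "\<And>r. r < 1 \<Longrightarrow> finite (Z \<inter> cball 0 r)"
    and "\<And>z. z \<in> Z \<Longrightarrow> c z > 0"
  obtains a :: "nat \<Rightarrow> complex" where
    "range a = Z" "(\<lambda>n. norm (a n)) \<longlonglongrightarrow> 1" "\<And>z. z \<in> Z \<Longrightarrow> card (a -` {z}) = c z"
proof -
  have inverse: "plane_to_disc (disc_to_plane z) = z" if "z \<in> Z" for z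
    using that assms(2) by (intro plane_to_disc_disc_to_plane) auto
  define A where "A = disc_to_plane ` Z"
  have "inj_on disc_to_plane Z"
    using inverse by (rule inj_on_inverseI)
  hence infinite_A: "infinite A"
    unfolding A_def using assms(1) finite_imageD by blast
  have finite_A: "finite (A \<inter> cball 0 R)" if "R \<ge> 0" for R
  proof -
    have "norm z \<le> R / (1 + R)" if "z \<in> Z" "norm (disc_to_plane z) \<le> R" for z
      using that assms(2) \<open>R \<ge> 0\<close> by (auto simp: norm_disc_to_plane field_simps)
    hence "A \<inter> cball 0 R \<subseteq> disc_to_plane ` (Z \<inter> cball 0 (R / (1 + R)))"
      by (auto simp: A_def)
    moreover have "finite (Z \<inter> cball 0 (R / (1 + R)))"
      using that by (intro assms(3)) simp
    ultimately show ?thesis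
      using finite_subset by blast
  qed
  obtain s :: "nat \<Rightarrow> complex" where s: "range s = A" "filterlim s at_infinity at_top"
    "\<And>w. w \<in> A \<Longrightarrow> card (s -` {w}) = c (plane_to_disc w)"
  proof (rule sequence_of_sparse_set_exists'[of A "c \<circ> plane_to_disc"])
    show "closed A"
      by (rule closed_if_finite_Int_cball[OF finite_A])
    show "(c \<circ> plane_to_disc) w > 0" if "w \<in> A" for w
      using that assms(4) inverse by (auto simp: A_def)
  qed (use infinite_A finite_A that in auto)
  show ?thesis
  proof (rule that[of "plane_to_disc \<circ> s"])
    have "range (plane_to_disc \<circ> s) = (\<lambda>z. plane_to_disc (disc_to_plane z)) ` Z"
      unfolding image_comp[symmetric] s(1) A_def image_image ..
    thus "range (plane_to_disc \<circ> s) = Z"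
      using inverse by simp
    have "filterlim (\<lambda>n. 1 + norm (s n)) at_top sequentially"
      by (intro filterlim_tendsto_add_at_top[OF tendsto_const] filterlim_at_infinity_imp_norm_at_top s(2))
    hence "(\<lambda>n. 1 - inverse (1 + norm (s n))) \<longlonglongrightarrow> 1 - 0"
      by (intro tendsto_intros tendsto_inverse_0_at_top)
    moreover have "1 - inverse (1 + norm (s n)) = norm ((plane_to_disc \<circ> s) n)" for n
      using add_pos_nonneg[OF zero_less_one norm_ge_zero[of "s n"]]
      by (simp add: norm_plane_to_disc field_simps)
    ultimately show "(\<lambda>n. norm ((plane_to_disc \<circ> s) n)) \<longlonglongrightarrow> 1"
      by simp
    fix z assume z: "z \<in> Z"
    have "plane_to_disc (s n) = z \<longleftrightarrow> s n = disc_to_plane z" for n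
      using inverse[OF z] disc_to_plane_plane_to_disc by metis
    hence "(plane_to_disc \<circ> s) -` {z} = s -` {disc_to_plane z}"
      by (simp only: set_eq_iff vimage_singleton_eq o_apply) blast
    thus "card ((plane_to_disc \<circ> s) -` {z}) = c z"
      using z s(3)[of "disc_to_plane z"] inverse by (auto simp: A_def)
  qed
qed

lemma disc_product_with_multiplicities:
  fixes Z :: "complex set" and c :: "complex \<Rightarrow> nat"
  assumes "infinite Z" "Z \<subseteq> ball 0 1 - {0}" "\<And>r. r < 1 \<Longrightarrow> finite (Z \<inter> cball 0 r)"
    and "\<And>z. z \<in> Z \<Longrightarrow> c z > 0"
  obtains f where "f holomorphic_on ball 0 1" "f 0 \<noteq> 0"
    "\<And>z. z \<in> ball 0 1 \<Longrightarrow> zorder f z = (if z \<in> Z then c z else 0)"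
    "\<And>z. z \<in> ball 0 1 \<Longrightarrow> f z = 0 \<longleftrightarrow> z \<in> Z"
proof -
  obtain a where a: "range a = Z" "(\<lambda>n. norm (a n)) \<longlonglongrightarrow> 1" "\<And>z. z \<in> Z \<Longrightarrow> card (a -` {z}) = c z"
    using disc_sequence_with_multiplicities[of Z c, OF assms(1) _ assms(3,4)] assms(2) by blast
  interpret P: disc_weierstrass_product a "\<lambda>n. n"
  proof
    have "a n \<in> ball 0 1 - {0}" for n
      using a(1) assms(2) by blast
    thus "a n \<noteq> 0" "norm (a n) < 1" for n
      by auto
  qed (use a(2) in auto)
  have card_a: "card (a -` {z}) = (if z \<in> Z then c z else 0)" for z
  proof (cases "z \<in> Z")
    case False
    hence "a -` {z} = {}"
      using a(1) by blast
    thus ?thesis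
      using False by simp
  qed (simp add: a(3))
  show ?thesis
    by (rule that[OF P.holomorphic P.f_0_nonzero]) (use P.zorder_f card_a P.f_eq_0_iff a(1) in auto)
qed

lemma disc_holomorphic_with_zorder:
  fixes d :: "complex \<Rightarrow> nat"
  assumes finite_d: "\<And>r. r < 1 \<Longrightarrow> finite {z \<in> cball 0 r. d z > 0}"
  obtains v where "v holomorphic_on ball 0 1" "\<And>z. z \<in> ball 0 1 \<Longrightarrow> zorder v z = d z"
    "\<And>z. z \<in> ball 0 1 \<Longrightarrow> v z = 0 \<longleftrightarrow> d z > 0"
proof (cases "finite {z \<in> ball 0 1. d z > 0}")
  case True
  define d' where "d' z = (if z \<in> ball 0 1 then d z else 0)" for z
  have "{z. d' z > 0} = {z \<in> ball 0 1. d z > 0}"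
    by (auto simp: d'_def)
  then obtain v where "v holomorphic_on UNIV" "\<And>z. zorder v z = d' z" "\<And>z. v z = 0 \<longleftrightarrow> d' z > 0"
    using holomorphic_with_finite_zorder[of d'] True by metis
  thus ?thesis
    using that[of v] holomorphic_on_subset by (auto simp: d'_def)
next
  case False
  txt \<open>The disc product needs nonzero points, so the zero at the origin comes from a power of \<open>\<zeta>\<close>.\<close>
  define Z where "Z = {z \<in> ball 0 1. z \<noteq> 0 \<and> d z > 0}"
  have "{z \<in> ball 0 1. d z > 0} \<subseteq> insert 0 Z"
    by (auto simp: Z_def)
  hence "infinite Z"
    using False finite_subset by auto
  moreover have "finite (Z \<inter> cball 0 r)" if "r < 1" for r
    using finite_d[OF that] by (rule finite_subset[rotated]) (auto simp: Z_def)
  moreover have "Z \<subseteq> ball 0 1 - {0}" "\<And>z. z \<in> Z \<Longrightarrow> d z > 0"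
    by (auto simp: Z_def)
  ultimately obtain f where f: "f holomorphic_on ball 0 1" "f 0 \<noteq> 0"
    "\<And>z. z \<in> ball 0 1 \<Longrightarrow> zorder f z = (if z \<in> Z then d z else 0)"
    "\<And>z. z \<in> ball 0 1 \<Longrightarrow> f z = 0 \<longleftrightarrow> z \<in> Z"
    using disc_product_with_multiplicities[of Z d] by blast
  show ?thesis
  proof (rule that[of "\<lambda>\<zeta>. \<zeta> ^ d 0 * f \<zeta>"])
    show "(\<lambda>\<zeta>. \<zeta> ^ d 0 * f \<zeta>) holomorphic_on ball 0 1"
      by (intro holomorphic_intros f(1))
    fix z :: complex assume z: "z \<in> ball 0 1"
    show "z ^ d 0 * f z = 0 \<longleftrightarrow> d z > 0"
      using f(4)[OF z] f(2) z by (auto simp: Z_def)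
    have "eventually (\<lambda>w. f w \<noteq> 0) (at z)" "eventually (\<lambda>w. w \<noteq> 0) (at z)"
      using holomorphic_eventually_nonzero[OF f(1) open_ball connected_ball z _ f(2)]
      by (auto intro: eventually_neq_at_within)
    hence "eventually (\<lambda>w. w ^ d 0 * f w \<noteq> 0) (at z)"
      by eventually_elim simp
    hence "zorder (\<lambda>\<zeta>. \<zeta> ^ d 0 * f \<zeta>) z = zorder (\<lambda>\<zeta>. \<zeta> ^ d 0) z + zorder f z"
      using z by (intro zorder_times_analytic analytic_intros holomorphic_on_imp_analytic_at[OF f(1)]) auto
    also have "\<dots> = d z"
      using zorder_monomial[of 0 "d 0" z] f(3)[OF z] z by (auto simp: Z_def)
    finally show "zorder (\<lambda>\<zeta>. \<zeta> ^ d 0 * f \<zeta>) z = d z" .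
  qed
qed

lemma disc_holomorphic_with_zorder_at_zeros:
  fixes d :: "complex \<Rightarrow> nat"
  assumes F: "F holomorphic_on ball 0 1" "w \<in> ball 0 1" "F w \<noteq> 0"
    and d: "\<And>z. z \<in> ball 0 1 \<Longrightarrow> d z > 0 \<Longrightarrow> F z = 0"
  obtains v where "v holomorphic_on ball 0 1" "\<And>z. z \<in> ball 0 1 \<Longrightarrow> zorder v z = d z"
    "\<And>z. z \<in> ball 0 1 \<Longrightarrow> v z = 0 \<longleftrightarrow> d z > 0"
proof -
  have "finite {z \<in> cball 0 r. d z > 0}" if "r < 1" for r
  proof (rule finite_subset)
    show "finite {z \<in> cball 0 r. F z = 0}"
      using that by (intro holomorphic_finite_zeros_in_compact[OF F(1) open_ball connected_ball _ _ F(2,3)]) auto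
  qed (use that d in auto)
  thus ?thesis
    using disc_holomorphic_with_zorder that by blast
qed

section \<open>Reflection in the real axis\<close>

lemma holomorphic_on_reflect [holomorphic_intros]:
  assumes "v holomorphic_on ball 0 r"
  shows "reflect v holomorphic_on ball 0 r"
proof -
  have "cnj ` ball 0 r = ball 0 r"
    unfolding image_cnj_conv_vimage_cnj by auto
  hence "cnj \<circ> v \<circ> cnj holomorphic_on ball 0 r"
    using assms by (intro holomorphic_on_compose_cnj_cnj) auto
  moreover have "cnj \<circ> v \<circ> cnj = reflect v"
    by (simp add: fun_eq_iff reflect_def)
  ultimately show ?thesis
    by simp
qed

lemma zorder_reflect:
  assumes f: "f holomorphic_on S" "open S" "connected S" and z: "cnj z \<in> S"
    and nonzero: "w \<in> S" "f w \<noteq> 0"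
  shows "zorder (reflect f) z = zorder f (cnj z)"
proof -
  define n where "n = zorder f (cnj z)"
  define g where "g = zor_poly f (cnj z)"
  have "(if f (cnj z) = 0 then n > 0 else n = 0) \<and> (\<exists>r. r > 0 \<and> cball (cnj z) r \<subseteq> S \<and>
          g holomorphic_on cball (cnj z) r \<and>
          (\<forall>x\<in>cball (cnj z) r. f x = g x * (x - cnj z) ^ nat n \<and> g x \<noteq> 0))"
    unfolding n_def g_def by (rule zorder_exist_zero[OF f z]) (use nonzero in auto)
  then obtain r where n: "n \<ge> 0" and r: "r > 0" "g holomorphic_on cball (cnj z) r"
    and fg: "\<And>x. x \<in> cball (cnj z) r \<Longrightarrow> f x = g x * (x - cnj z) ^ nat n \<and> g x \<noteq> 0"
    by (metis order.refl less_imp_le)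
  have cnj_ball: "cnj ` ball z r \<subseteq> cball (cnj z) r"
    by (auto simp: dist_norm complex_cnj_diff[symmetric] simp del: complex_cnj_diff)
  have "zorder (reflect f) z = int (nat n)"
  proof (rule zorder_eqI[where S = "ball z r" and g = "cnj \<circ> g \<circ> cnj"])
    show "cnj \<circ> g \<circ> cnj holomorphic_on ball z r"
      using holomorphic_on_subset[OF r(2) cnj_ball] by (intro holomorphic_on_compose_cnj_cnj) auto
    show "(cnj \<circ> g \<circ> cnj) z \<noteq> 0"
      using fg[of "cnj z"] r by simp
    fix x assume "x \<in> ball z r" "x \<noteq> z"
    hence "f (cnj x) = g (cnj x) * (cnj x - cnj z) ^ nat n"
      using fg cnj_ball by blast
    hence "reflect f x = cnj (g (cnj x)) * (x - z) ^ nat n"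
      by (simp add: reflect_def)
    thus "reflect f x = (cnj \<circ> g \<circ> cnj) x * (x - z) powi int (nat n)"
      unfolding power_int_of_nat o_def .
  qed (use r in auto)
  thus ?thesis
    using n by (simp add: n_def)
qed

lemma mult_reflect_of_real:
  "f (of_real x) * reflect f (of_real x) = of_real ((norm (f (of_real x)))\<^sup>2)"
  unfolding reflect_def by (simp only: complex_cnj_complex_of_real complex_norm_square)

lemma eq_on_ball_if_eq_on_real_segment:
  assumes "f holomorphic_on ball 0 1" "g holomorphic_on ball 0 1"
    and "\<And>x. -1 < x \<Longrightarrow> x < 1 \<Longrightarrow> f (of_real x) = g (of_real x)" and "z \<in> ball 0 1"
  shows "f z = g z"
proof -
  have limpt: "0 islimpt complex_of_real ` {-1<..<1}"
    unfolding islimpt_approachable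
  proof (intro allI impI)
    fix e :: real assume "e > 0"
    define x where "x = min (e/2) (1/2)"
    have "0 < x" "x < 1" "x < e"
      using \<open>e > 0\<close> by (auto simp: x_def)
    thus "\<exists>y\<in>complex_of_real ` {-1<..<1}. y \<noteq> 0 \<and> dist y 0 < e"
      by (intro bexI[of _ "of_real x"]) auto
  qed
  have "f z - g z = 0"
  proof (rule analytic_continuation[of "\<lambda>z. f z - g z" "ball 0 1" "complex_of_real ` {-1<..<1}" 0 z])
    show "(\<lambda>z. f z - g z) holomorphic_on ball 0 1"
      using assms(1,2) by (intro holomorphic_intros)
  qed (use assms(3,4) limpt in auto)
  thus ?thesis
    by simp
qed

lemma eq_0_if_mult_reflect_eq_of_eq_0:
  assumes G: "G holomorphic_on ball 0 1"
    and FG: "\<And>z. z \<in> ball 0 1 \<Longrightarrow> F z * reflect F z = G z * reflect G z"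
    and F: "\<And>z. z \<in> ball 0 1 \<Longrightarrow> F z = 0" and z: "z \<in> ball 0 1"
  shows "G z = 0"
proof (rule ccontr)
  assume "G z \<noteq> 0"
  hence "reflect G (cnj z) \<noteq> 0"
    by (simp add: reflect_def)
  moreover have "G x * reflect G x = 0" if "x \<in> ball 0 1" for x
    using FG[OF that] F[OF that] by simp
  ultimately have "G z = 0"
    using G z by (intro holomorphic_eq_0_if_mult_eq_0[of G "ball 0 1" "reflect G" "cnj z"])
      (auto intro: holomorphic_intros)
  with \<open>G z \<noteq> 0\<close> show False
    by contradiction
qed

lemma reflect_inverse_has_sqrt:
  assumes "\<phi> holomorphic_on ball 0 1" "\<And>z. z \<in> ball 0 1 \<Longrightarrow> \<phi> z * reflect \<phi> z = 1"
  obtains \<psi> where "\<psi> holomorphic_on ball 0 1" "\<And>z. z \<in> ball 0 1 \<Longrightarrow> \<phi> z = \<psi> z ^ 2"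
    "\<And>z. z \<in> ball 0 1 \<Longrightarrow> \<psi> z * reflect \<psi> z = 1"
proof -
  have "\<phi> z \<noteq> 0" if "z \<in> ball 0 1" for z
    using assms(2)[OF that] by auto
  then obtain g where g: "g holomorphic_on ball 0 1" "\<And>z. z \<in> ball 0 1 \<Longrightarrow> \<phi> z = exp (g z)"
    using contractible_imp_holomorphic_log[OF assms(1) convex_imp_contractible[OF convex_ball]] by blast
  have g_reflect: "g z + reflect g z = 0" if "z \<in> ball 0 1" for z
  proof (rule eq_on_ball_if_eq_on_real_segment[of "\<lambda>z. g z + reflect g z" "\<lambda>_. 0", OF _ _ _ that])
    fix x :: real assume x: "-1 < x" "x < 1"
    define y where "y = g (of_real x)"
    have "exp (of_real (2 * Re y)) = exp (y + cnj y)"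
      by (simp add: complex_add_cnj)
    also have "\<dots> = \<phi> (of_real x) * reflect \<phi> (of_real x)"
      using x g(2)[of "of_real x"] by (simp add: y_def reflect_def exp_add exp_cnj)
    also have "\<dots> = 1"
      using x by (intro assms(2)) simp
    finally have "exp (2 * Re y) = 1"
      by (metis exp_of_real of_real_eq_1_iff)
    hence "Re y = 0"
      by simp
    thus "g (of_real x) + reflect g (of_real x) = 0"
      by (simp add: y_def reflect_def complex_eq_iff)
  qed (intro holomorphic_intros g(1))+
  show ?thesis
  proof (rule that[of "\<lambda>z. exp (g z / 2)"])
    show "(\<lambda>z. exp (g z / 2)) holomorphic_on ball 0 1"
      by (intro holomorphic_intros g(1)) auto
    fix z :: complex assume z: "z \<in> ball 0 1"
    show "\<phi> z = (exp (g z / 2))\<^sup>2"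
      using g(2)[OF z] by (simp add: power2_eq_square exp_add[symmetric])
    have "reflect (\<lambda>z. exp (g z / 2)) z = exp (reflect g z / 2)"
      by (simp add: reflect_def exp_cnj)
    thus "exp (g z / 2) * reflect (\<lambda>z. exp (g z / 2)) z = 1"
      using g_reflect[OF z] by (simp add: exp_add[symmetric] add_divide_distrib[symmetric])
  qed
qed

section \<open>Factorisation\<close>

lemma zorder_reflect_balance:
  assumes F: "F holomorphic_on ball 0 1" and G: "G holomorphic_on ball 0 1"
    and w1: "w1 \<in> ball 0 1" "F w1 \<noteq> 0" and w2: "w2 \<in> ball 0 1" "G w2 \<noteq> 0"
    and FG: "\<And>z. z \<in> ball 0 1 \<Longrightarrow> F z * reflect F z = G z * reflect G z"
    and z: "z \<in> ball 0 1"
  shows "zorder F z + zorder F (cnj z) = zorder G z + zorder G (cnj z)"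
proof -
  have zorder_mult_reflect: "zorder (\<lambda>x. H x * reflect H x) z = zorder H z + zorder H (cnj z)"
    if "H holomorphic_on ball 0 1" "w \<in> ball 0 1" "H w \<noteq> 0" for H w
    using that z zorder_reflect[OF that(1) open_ball connected_ball _ that(2,3), of z]
    by (subst zorder_mult_holomorphic[of H "ball 0 1" "reflect H" z w "cnj w"])
       (auto simp: reflect_def intro: holomorphic_intros)
  have "eventually (\<lambda>x. x \<in> ball 0 1) (at z)"
    using z by (intro eventually_at_in_open') auto
  hence "zorder (\<lambda>x. F x * reflect F x) z = zorder (\<lambda>x. G x * reflect G x) z"
    by (intro zorder_cong) (auto elim!: eventually_mono simp: FG)
  thus ?thesis
    using zorder_mult_reflect[OF F w1] zorder_mult_reflect[OF G w2] by simp
qed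

text \<open>Since \<open>ord\<^sub>F + ord\<^sub>F \<circ> cnj = ord\<^sub>G + ord\<^sub>G \<circ> cnj\<close>, the divisors
  \<open>U = min ord\<^sub>F ord\<^sub>G\<close> and \<open>V = (ord\<^sub>F - ord\<^sub>G)\<^sup>+\<close> satisfy \<open>ord\<^sub>F = U + V\<close> and
  \<open>ord\<^sub>G = U + V \<circ> cnj\<close>.\<close>

lemma reflect_divisor_split:
  assumes F: "F holomorphic_on ball 0 1" and G: "G holomorphic_on ball 0 1"
    and w1: "w1 \<in> ball 0 1" "F w1 \<noteq> 0" and w2: "w2 \<in> ball 0 1" "G w2 \<noteq> 0"
    and FG: "\<And>z. z \<in> ball 0 1 \<Longrightarrow> F z * reflect F z = G z * reflect G z"
  obtains u0 v0 where "u0 holomorphic_on ball 0 1" "v0 holomorphic_on ball 0 1" "u0 w1 \<noteq> 0" "v0 w1 \<noteq> 0"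
    "\<And>z. z \<in> ball 0 1 \<Longrightarrow> zorder (\<lambda>x. u0 x * v0 x) z = zorder F z"
    "\<And>z. z \<in> ball 0 1 \<Longrightarrow> zorder (\<lambda>x. u0 x * reflect v0 x) z = zorder G z"
proof -
  have nonneg: "zorder F z \<ge> 0" "zorder G z \<ge> 0" if "z \<in> ball 0 1" for z
    using zorder_nonneg_holomorphic[OF F open_ball connected_ball that w1]
      zorder_nonneg_holomorphic[OF G open_ball connected_ball that w2] by auto
  define du where "du z = nat (min (zorder F z) (zorder G z))" for z
  define dv where "dv z = nat (zorder F z - zorder G z)" for z
  have F_zero: "F z = 0" if "z \<in> ball 0 1" "du z > 0 \<or> dv z > 0" for z
    using that nonneg[OF that(1)] zorder_pos_iff_holomorphic[OF F open_ball connected_ball that(1) w1]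
    by (auto simp: du_def dv_def)
  obtain u0 where u0: "u0 holomorphic_on ball 0 1" "\<And>z. z \<in> ball 0 1 \<Longrightarrow> zorder u0 z = du z"
      "\<And>z. z \<in> ball 0 1 \<Longrightarrow> u0 z = 0 \<longleftrightarrow> du z > 0"
    using disc_holomorphic_with_zorder_at_zeros[OF F w1, of du] F_zero by blast
  obtain v0 where v0: "v0 holomorphic_on ball 0 1" "\<And>z. z \<in> ball 0 1 \<Longrightarrow> zorder v0 z = dv z"
      "\<And>z. z \<in> ball 0 1 \<Longrightarrow> v0 z = 0 \<longleftrightarrow> dv z > 0"
    using disc_holomorphic_with_zorder_at_zeros[OF F w1, of dv] F_zero by blast
  have "zorder F w1 = 0"
    using nonneg(1)[OF w1(1)] zorder_pos_iff_holomorphic[OF F open_ball connected_ball w1(1) w1] w1(2) by simp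
  hence nonzero: "u0 w1 \<noteq> 0" "v0 w1 \<noteq> 0" "cnj w1 \<in> ball 0 1" "reflect v0 (cnj w1) \<noteq> 0"
    using u0(3)[OF w1(1)] v0(3)[OF w1(1)] nonneg(2)[OF w1(1)] w1(1) by (auto simp: du_def dv_def reflect_def)
  show ?thesis
  proof (rule that[OF u0(1) v0(1) nonzero(1,2)])
    fix z :: complex assume z: "z \<in> ball 0 1"
    show "zorder (\<lambda>x. u0 x * v0 x) z = zorder F z"
      using zorder_mult_holomorphic[OF u0(1) v0(1) open_ball connected_ball z w1(1) nonzero(1) w1(1) nonzero(2)]
        u0(2)[OF z] v0(2)[OF z] nonneg[OF z] by (simp add: du_def dv_def)
    have "cnj z \<in> ball 0 1"
      using z by simp
    hence "zorder (reflect v0) z = dv (cnj z)"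
      using zorder_reflect[OF v0(1) open_ball connected_ball _ w1(1) nonzero(2)] v0(2)[of "cnj z"] by simp
    thus "zorder (\<lambda>x. u0 x * reflect v0 x) z = zorder G z"
      using zorder_mult_holomorphic[OF u0(1) holomorphic_on_reflect[OF v0(1)] open_ball connected_ball z
          w1(1) nonzero(1) nonzero(3,4)]
        u0(2)[OF z] nonneg[OF z] nonneg[OF \<open>cnj z \<in> ball 0 1\<close>] zorder_reflect_balance[OF F G w1 w2 FG z]
      by (simp add: du_def dv_def)
  qed
qed

lemma reflect_zero_free_factorization:
  assumes F: "F holomorphic_on ball 0 1" and G: "G holomorphic_on ball 0 1"
    and w1: "w1 \<in> ball 0 1" "F w1 \<noteq> 0" and w2: "w2 \<in> ball 0 1" "G w2 \<noteq> 0"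
    and FG: "\<And>z. z \<in> ball 0 1 \<Longrightarrow> F z * reflect F z = G z * reflect G z"
  obtains u0 v0 h k where
    "u0 holomorphic_on ball 0 1" "v0 holomorphic_on ball 0 1" "h holomorphic_on ball 0 1" "k holomorphic_on ball 0 1"
    "\<And>z. z \<in> ball 0 1 \<Longrightarrow> h z \<noteq> 0" "\<And>z. z \<in> ball 0 1 \<Longrightarrow> k z \<noteq> 0"
    "\<And>z. z \<in> ball 0 1 \<Longrightarrow> F z = h z * (u0 z * v0 z)"
    "\<And>z. z \<in> ball 0 1 \<Longrightarrow> G z = k z * (u0 z * reflect v0 z)"
proof -
  obtain u0 v0 where u0: "u0 holomorphic_on ball 0 1" and v0: "v0 holomorphic_on ball 0 1"
    and nonzero: "u0 w1 \<noteq> 0" "v0 w1 \<noteq> 0"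
    and zorder_F: "\<And>z. z \<in> ball 0 1 \<Longrightarrow> zorder (\<lambda>x. u0 x * v0 x) z = zorder F z"
    and zorder_G: "\<And>z. z \<in> ball 0 1 \<Longrightarrow> zorder (\<lambda>x. u0 x * reflect v0 x) z = zorder G z"
    using reflect_divisor_split[OF F G w1 w2 FG] by blast
  have uv: "(\<lambda>z. u0 z * v0 z) holomorphic_on ball 0 1" "u0 w1 * v0 w1 \<noteq> 0"
    using u0 v0 nonzero by (auto intro: holomorphic_intros)
  obtain h where h: "h holomorphic_on ball 0 1" "\<And>z. z \<in> ball 0 1 \<Longrightarrow> h z \<noteq> 0"
    "\<And>z. z \<in> ball 0 1 \<Longrightarrow> F z = h z * (u0 z * v0 z)"
    using holomorphic_factor_by_zorder[OF uv(1) F open_ball connected_ball w1(1) uv(2) w1 zorder_F] by blast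
  have cnj_w1: "cnj w1 \<in> ball 0 1" "reflect v0 (cnj w1) \<noteq> 0"
    using w1(1) nonzero(2) by (auto simp: reflect_def)
  obtain w3 where w3: "w3 \<in> ball 0 1" "u0 w3 * reflect v0 w3 \<noteq> 0"
    by (fact holomorphic_mult_not_identically_0[OF u0 holomorphic_on_reflect[OF v0]
        open_ball connected_ball w1(1) nonzero(1) cnj_w1])
  have uv': "(\<lambda>z. u0 z * reflect v0 z) holomorphic_on ball 0 1"
    using u0 v0 by (auto intro: holomorphic_intros)
  obtain k where k: "k holomorphic_on ball 0 1" "\<And>z. z \<in> ball 0 1 \<Longrightarrow> k z \<noteq> 0"
    "\<And>z. z \<in> ball 0 1 \<Longrightarrow> G z = k z * (u0 z * reflect v0 z)"
    using holomorphic_factor_by_zorder[OF uv' G open_ball connected_ball w3 w2 zorder_G] by blast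
  show ?thesis
    by (rule that[OF u0 v0 h(1) k(1) h(2) k(2) h(3) k(3)])
qed

lemma mult_reflect_cancel:
  assumes F: "F holomorphic_on ball 0 1" "w \<in> ball 0 1" "F w \<noteq> 0"
    and ab: "a holomorphic_on ball 0 1" "b holomorphic_on ball 0 1"
    and eq: "\<And>x. x \<in> ball 0 1 \<Longrightarrow> a x * (F x * reflect F x) = b x * (F x * reflect F x)"
    and z: "z \<in> ball 0 1"
  shows "a z = b z"
proof -
  have "cnj w \<in> ball 0 1" "reflect F (cnj w) \<noteq> 0"
    using F(2,3) by (auto simp: reflect_def)
  then obtain w' where w': "w' \<in> ball 0 1" "F w' * reflect F w' \<noteq> 0"
    by (rule holomorphic_mult_not_identically_0[OF F(1) holomorphic_on_reflect[OF F(1)]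
        open_ball connected_ball F(2,3)])
  have "a z - b z = 0"
  proof (rule holomorphic_eq_0_if_mult_eq_0[of "\<lambda>x. a x - b x" "ball 0 1" "\<lambda>x. F x * reflect F x" w' z])
    show "(a x - b x) * (F x * reflect F x) = 0" if "x \<in> ball 0 1" for x
      using eq[OF that] by (simp add: left_diff_distrib)
  qed (use ab F w' z in \<open>auto intro!: holomorphic_intros\<close>)
  thus ?thesis
    by simp
qed

lemma reflect_ratio_sqrt:
  assumes hk: "h holomorphic_on ball 0 1" "k holomorphic_on ball 0 1"
    and zero_free: "\<And>z. z \<in> ball 0 1 \<Longrightarrow> h z \<noteq> 0" "\<And>z. z \<in> ball 0 1 \<Longrightarrow> k z \<noteq> 0"
    and balanced: "\<And>z. z \<in> ball 0 1 \<Longrightarrow> h z * reflect h z = k z * reflect k z"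
  obtains \<psi> where "\<psi> holomorphic_on ball 0 1" "\<And>z. z \<in> ball 0 1 \<Longrightarrow> k z = h z * \<psi> z ^ 2"
    "\<And>z. z \<in> ball 0 1 \<Longrightarrow> \<psi> z * reflect \<psi> z = 1"
proof -
  define \<phi> where "\<phi> z = k z / h z" for z
  have \<phi>_holomorphic: "\<phi> holomorphic_on ball 0 1"
    unfolding \<phi>_def using hk zero_free by (intro holomorphic_intros) auto
  have \<phi>_reflect: "\<phi> z * reflect \<phi> z = 1" if "z \<in> ball 0 1" for z
  proof -
    have "reflect h z \<noteq> 0" "reflect k z \<noteq> 0"
      using zero_free[of "cnj z"] that by (auto simp: reflect_def)
    moreover have "\<phi> z * reflect \<phi> z = (k z * reflect k z) / (h z * reflect h z)"
      by (simp add: \<phi>_def reflect_def)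
    ultimately show ?thesis
      using balanced[OF that] zero_free[OF that] by simp
  qed
  obtain \<psi> where \<psi>: "\<psi> holomorphic_on ball 0 1" "\<And>z. z \<in> ball 0 1 \<Longrightarrow> \<phi> z = \<psi> z ^ 2"
    "\<And>z. z \<in> ball 0 1 \<Longrightarrow> \<psi> z * reflect \<psi> z = 1"
    using reflect_inverse_has_sqrt[OF \<phi>_holomorphic \<phi>_reflect] by blast
  have "k z = h z * \<psi> z ^ 2" if "z \<in> ball 0 1" for z
    using \<psi>(2)[OF that] zero_free(1)[OF that] by (simp add: \<phi>_def field_simps)
  with \<psi>(1,3) show ?thesis
    using that by blast
qed

lemma reflect_factorization:
  assumes F: "F holomorphic_on ball 0 1" and G: "G holomorphic_on ball 0 1"
    and FG: "\<And>z. z \<in> ball 0 1 \<Longrightarrow> F z * reflect F z = G z * reflect G z"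
  obtains u v where "u holomorphic_on ball 0 1" "v holomorphic_on ball 0 1"
    "\<And>z. z \<in> ball 0 1 \<Longrightarrow> F z = u z * v z" "\<And>z. z \<in> ball 0 1 \<Longrightarrow> G z = u z * reflect v z"
proof (cases "\<forall>z\<in>ball 0 1. F z = 0")
  case True
  hence "G z = 0" if "z \<in> ball 0 1" for z
    using eq_0_if_mult_reflect_eq_of_eq_0[OF G FG _ that] by blast
  thus ?thesis
    using that[of "\<lambda>_. 0" "\<lambda>_. 1"] True by simp
next
  case False
  then obtain w1 where w1: "w1 \<in> ball 0 1" "F w1 \<noteq> 0"
    by blast
  then obtain w2 where w2: "w2 \<in> ball 0 1" "G w2 \<noteq> 0"
    using eq_0_if_mult_reflect_eq_of_eq_0[OF F FG[symmetric]] by blast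
  obtain u0 v0 h k where holo: "u0 holomorphic_on ball 0 1" "v0 holomorphic_on ball 0 1"
      "h holomorphic_on ball 0 1" "k holomorphic_on ball 0 1"
    and zero_free: "\<And>z. z \<in> ball 0 1 \<Longrightarrow> h z \<noteq> 0" "\<And>z. z \<in> ball 0 1 \<Longrightarrow> k z \<noteq> 0"
    and F_eq: "\<And>z. z \<in> ball 0 1 \<Longrightarrow> F z = h z * (u0 z * v0 z)"
    and G_eq: "\<And>z. z \<in> ball 0 1 \<Longrightarrow> G z = k z * (u0 z * reflect v0 z)"
    using reflect_zero_free_factorization[OF F G w1 w2 FG] by blast
  have "h z * reflect h z = k z * reflect k z" if "z \<in> ball 0 1" for z
  proof (rule mult_reflect_cancel[OF F w1 _ _ _ that])
    fix x :: complex assume x: "x \<in> ball 0 1"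
    have "F x * reflect F x = h x * reflect h x * (u0 x * reflect u0 x * (v0 x * reflect v0 x))"
      "G x * reflect G x = k x * reflect k x * (u0 x * reflect u0 x * (v0 x * reflect v0 x))"
      using x F_eq[of x] F_eq[of "cnj x"] G_eq[of x] G_eq[of "cnj x"] by (simp_all add: reflect_def)
    thus "h x * reflect h x * (F x * reflect F x) = k x * reflect k x * (F x * reflect F x)"
      using FG[OF x] by (metis mult.left_commute)
  qed (intro holomorphic_intros holo)+
  then obtain \<psi> where \<psi>: "\<psi> holomorphic_on ball 0 1" "\<And>z. z \<in> ball 0 1 \<Longrightarrow> k z = h z * \<psi> z ^ 2"
    "\<And>z. z \<in> ball 0 1 \<Longrightarrow> \<psi> z * reflect \<psi> z = 1"
    using reflect_ratio_sqrt[OF holo(3,4) zero_free] by blast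
  show ?thesis
  proof (rule that[of "\<lambda>z. h z * u0 z * \<psi> z" "\<lambda>z. v0 z * reflect \<psi> z"])
    show "(\<lambda>z. h z * u0 z * \<psi> z) holomorphic_on ball 0 1" "(\<lambda>z. v0 z * reflect \<psi> z) holomorphic_on ball 0 1"
      using holo \<psi>(1) by (auto intro!: holomorphic_intros)
    fix z :: complex assume z: "z \<in> ball 0 1"
    show "F z = h z * u0 z * \<psi> z * (v0 z * reflect \<psi> z)"
      using F_eq[OF z] \<psi>(3)[OF z] by (simp add: algebra_simps)
    show "G z = h z * u0 z * \<psi> z * reflect (\<lambda>z. v0 z * reflect \<psi> z) z"
      using G_eq[OF z] \<psi>(2)[OF z] by (simp add: reflect_def power2_eq_square mult_ac)
  qed
qed

theorem corollary3p3:
  fixes F G :: "complex \<Rightarrow> complex"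
  assumes "F \<in> hardy2" and "G \<in> hardy2"
  shows "(\<forall>x::real. -1 < x \<and> x < 1 \<longrightarrow> cmod (F (complex_of_real x)) = cmod (G (complex_of_real x)))
     \<longleftrightarrow> (\<exists>u v. u holomorphic_on ball 0 1 \<and> v holomorphic_on ball 0 1 \<and>
            (\<forall>z\<in>ball 0 1. F z = u z * v z \<and> G z = u z * reflect v z))"
proof
  assume eq: "\<forall>x::real. -1 < x \<and> x < 1 \<longrightarrow> cmod (F (complex_of_real x)) = cmod (G (complex_of_real x))"
  have F: "F holomorphic_on ball 0 1" and G: "G holomorphic_on ball 0 1"
    using assms by (auto simp: hardy2_def)
  have "F z * reflect F z = G z * reflect G z" if "z \<in> ball 0 1" for z
  proof (rule eq_on_ball_if_eq_on_real_segment[of "\<lambda>z. F z * reflect F z" "\<lambda>z. G z * reflect G z", OF _ _ _ that])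
    show "F (of_real x) * reflect F (of_real x) = G (of_real x) * reflect G (of_real x)" if "-1 < x" "x < 1" for x
      using eq that by (simp only: mult_reflect_of_real)
  qed (intro holomorphic_intros F G)+
  from reflect_factorization[OF F G this] show "\<exists>u v. u holomorphic_on ball 0 1 \<and> v holomorphic_on ball 0 1 \<and>
      (\<forall>z\<in>ball 0 1. F z = u z * v z \<and> G z = u z * reflect v z)"
    by metis
next
  assume "\<exists>u v. u holomorphic_on ball 0 1 \<and> v holomorphic_on ball 0 1 \<and>
            (\<forall>z\<in>ball 0 1. F z = u z * v z \<and> G z = u z * reflect v z)"
  thus "\<forall>x::real. -1 < x \<and> x < 1 \<longrightarrow> cmod (F (complex_of_real x)) = cmod (G (complex_of_real x))"
    by (auto simp: reflect_def norm_mult abs_less_iff)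
qed

end
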